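(* Let $f:\mathbb{R}^n\to\overline{\mathbb{R}}$ be proper lower semicontinuous, $(\bar x,\bar v)\in\operatorname{gph}\partial f$, and $0<\varepsilon_2<\varepsilon_1$. Then: (i) for all $(x,v)\in\operatorname{gph}T_{\varepsilon_2}(\bar x,\bar v)$, $\operatorname{gph}T_{\varepsilon_1-\varepsilon_2}(x,v)\subset\operatorname{gph}T_{\varepsilon_1}(\bar x,\bar v)$; (ii) let $s\in\mathbb{R}$ and suppose $f$ is variationally $s$-convex at $\bar x$ for $\bar v$ with corresponding radius $\varepsilon_1$, i.e. $f(x')\ge f(x)+\langle v,x'-x\rangle+\frac s2\|x'-x\|^2$ for all $(x,v)\in\operatorname{gph}T_{\varepsilon_1}(\bar x,\bar v)$ and $x'\in B(\bar x,\varepsilon_1)$. Then for every $(x,v)\in\operatorname{gph}T_{\varepsilon_2}(\bar x,\bar v)$, $f$ is variationally $s$-convex at $x$ for $v$ with radius $\varepsilon_1-\varepsilon_2$, i.e. $f(x')\ge f(\tilde x)+\langle\tilde v,x'-\tilde x\rangle+\frac s2\|x'-\tilde x\|^2$ for all $(\tilde x,\tilde v)\in\operatorname{gph}T_{\varepsilon_1-\varepsilon_2}(x,v)$ and $x'\in B(x,\varepsilon_1-\varepsilon_2)$.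
   Context: $\partial f$: limiting subdifferential. $B(x,r)$: open ball. For $(x,v)\in\operatorname{gph}\partial f$ and $\varepsilon>0$: $\operatorname{gph}T_\varepsilon(x,v)=\{(\tilde x,\tilde v)\in\operatorname{gph}\partial f:\tilde x\in B(x,\varepsilon),\tilde v\in B(v,\varepsilon),f(\tilde x)<f(x)+\varepsilon\}$ ($f$-attentive $\varepsilon$-localization of $\partial f$ around $(x,v)$). Variational $s$-convexity at $\bar x$ for $\bar v$ is characterized by: $f(\bar x)$ finite, $f$ l.s.c. at $\bar x$, and existence of $\varepsilon>0$ and a neighborhood of $\bar x$ on which the inequality $f(x')\ge f(x)+\langle v,x'-x\rangle+\frac s2\|x'-x\|^2$ holds for all $(x,v)\in\operatorname{gph}T_\varepsilon(\bar x,\bar v)$. *)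

theory Defs
  imports "HOL-Analysis.Analysis"
begin

definition proper_fun :: "('a::euclidean_space \<Rightarrow> ereal) \<Rightarrow> bool" where
  "proper_fun f \<longleftrightarrow> (\<forall>x. f x \<noteq> -\<infinity>) \<and> (\<exists>x. f x < \<infinity>)"

definition lsc_fun :: "('a::euclidean_space \<Rightarrow> ereal) \<Rightarrow> bool" where
  "lsc_fun f \<longleftrightarrow> (\<forall>x. \<forall>c. c < f x \<longrightarrow> eventually (\<lambda>y. c < f y) (at x))"

definition regular_subdiff :: "('a::euclidean_space \<Rightarrow> ereal) \<Rightarrow> 'a \<Rightarrow> 'a set" where
  "regular_subdiff f x = {v. \<bar>f x\<bar> \<noteq> \<infinity> \<and>
     (\<forall>e>0. \<exists>d>0. \<forall>y\<in>ball x d.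
        f y \<ge> f x + ereal (inner v (y - x) - e * norm (y - x)))}"

definition limiting_subdiff :: "('a::euclidean_space \<Rightarrow> ereal) \<Rightarrow> 'a \<Rightarrow> 'a set" where
  "limiting_subdiff f x = {v. \<bar>f x\<bar> \<noteq> \<infinity> \<and>
     (\<exists>xs vs. xs \<longlonglongrightarrow> x \<and> (\<lambda>k. f (xs k)) \<longlonglongrightarrow> f x \<and>
        (\<forall>k. vs k \<in> regular_subdiff f (xs k)) \<and> vs \<longlonglongrightarrow> v)}"

definition gph_T :: "('a::euclidean_space \<Rightarrow> ereal) \<Rightarrow> real \<Rightarrow> 'a \<Rightarrow> 'a \<Rightarrow> ('a \<times> 'a) set" where
  "gph_T f e x v = {(x', v'). v' \<in> limiting_subdiff f x' \<and> x' \<in> ball x e \<and>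
      v' \<in> ball v e \<and> f x' < f x + ereal e}"

end

theory Submission
  imports Defs
begin

text \<open>Both parts rest on one observation: localizations compose additively.
  If \<open>(x, v)\<close> lies in the \<open>e\<close>-localization around \<open>(xb, vb)\<close>, then by the
  triangle inequality for \<open>x\<close> and \<open>v\<close>, and by chaining the two strict bounds on
  function values, the \<open>d\<close>-localization around \<open>(x, v)\<close> lies in the
  \<open>(e + d)\<close>-localization around \<open>(xb, vb)\<close>.  Since also
  \<open>ball x d \<subseteq> ball xb (e + d)\<close>, the variational convexity inequality at
  \<open>(xb, vb)\<close> with radius \<open>e + d\<close> already contains the one at \<open>(x, v)\<close> with
  radius \<open>d\<close>.\<close>

definition var_convex_at :: "('a::euclidean_space \<Rightarrow> ereal) \<Rightarrow> real \<Rightarrow> real \<Rightarrow> 'a \<Rightarrow> 'a \<Rightarrow> bool"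
  where "var_convex_at f s e x v \<longleftrightarrow>
    (\<forall>(xt, vt) \<in> gph_T f e x v. \<forall>x' \<in> ball x e.
       f x' \<ge> f xt + ereal (inner vt (x' - xt) + s / 2 * (norm (x' - xt))\<^sup>2))"

lemma ball_subset_ball_add:
  fixes x xb :: "'a::metric_space"
  assumes "x \<in> ball xb e"
  shows "ball x d \<subseteq> ball xb (e + d)"
proof
  fix y assume "y \<in> ball x d"
  then have "dist xb x + dist x y < e + d"
    using assms by simp
  then show "y \<in> ball xb (e + d)"
    using dist_triangle[of xb y x] by simp
qed

lemma ereal_less_add_trans:
  fixes a b c :: ereal
  assumes "a < b + ereal d" and "b < c + ereal e"
  shows "a < c + ereal (e + d)"
proof -
  have "b + ereal d < (c + ereal e) + ereal d"
    using ereal_less_add[OF _ assms(2), of "ereal d"] by (simp add: add.commute)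
  also have "\<dots> = c + ereal (e + d)"
    by (simp add: add.assoc)
  finally show ?thesis
    using assms(1) by simp
qed

lemma gph_T_trans:
  assumes "(x, v) \<in> gph_T f e xb vb"
  shows "gph_T f d x v \<subseteq> gph_T f (e + d) xb vb"
proof
  fix p assume "p \<in> gph_T f d x v"
  then obtain xt vt where p: "p = (xt, vt)" and "(xt, vt) \<in> gph_T f d x v"
    by (cases p) auto
  then have "vt \<in> limiting_subdiff f xt" and xt: "xt \<in> ball x d" and vt: "vt \<in> ball v d"
    and f_xt: "f xt < f x + ereal d"
    by (auto simp: gph_T_def)
  moreover have x: "x \<in> ball xb e" and v: "v \<in> ball vb e" and f_x: "f x < f xb + ereal e"
    using assms by (auto simp: gph_T_def)
  moreover have "xt \<in> ball xb (e + d)" "vt \<in> ball vb (e + d)"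
    using ball_subset_ball_add[OF x] ball_subset_ball_add[OF v] xt vt by blast+
  moreover have "f xt < f xb + ereal (e + d)"
    using ereal_less_add_trans[OF f_xt f_x] .
  ultimately show "p \<in> gph_T f (e + d) xb vb"
    unfolding p gph_T_def by blast
qed

lemma var_convex_at_localization:
  assumes "var_convex_at f s (e + d) xb vb" and "(x, v) \<in> gph_T f e xb vb"
  shows "var_convex_at f s d x v"
proof -
  have "x \<in> ball xb e"
    using assms(2) by (simp add: gph_T_def)
  then have "ball x d \<subseteq> ball xb (e + d)"
    by (rule ball_subset_ball_add)
  then show ?thesis
    using assms gph_T_trans[OF assms(2)] unfolding var_convex_at_def by blast
qed

theorem proposition3p3:
  fixes f :: "'a::euclidean_space \<Rightarrow> ereal"
    and xb vb :: 'a and e1 e2 :: real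
  assumes "proper_fun f" and "lsc_fun f"
    and "vb \<in> limiting_subdiff f xb"
    and "0 < e2" and "e2 < e1"
  shows "(\<forall>(x, v) \<in> gph_T f e2 xb vb. gph_T f (e1 - e2) x v \<subseteq> gph_T f e1 xb vb)
    \<and> (\<forall>s::real.
         (\<forall>(x, v) \<in> gph_T f e1 xb vb. \<forall>x' \<in> ball xb e1.
            f x' \<ge> f x + ereal (inner v (x' - x) + s / 2 * (norm (x' - x))\<^sup>2))
         \<longrightarrow> (\<forall>(x, v) \<in> gph_T f e2 xb vb. \<forall>(xt, vt) \<in> gph_T f (e1 - e2) x v.
              \<forall>x' \<in> ball x (e1 - e2).
                f x' \<ge> f xt + ereal (inner vt (x' - xt) + s / 2 * (norm (x' - xt))\<^sup>2)))"
proof -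
  have e1: "e2 + (e1 - e2) = e1" by simp
  show ?thesis
    using gph_T_trans[where e = e2 and d = "e1 - e2"]
      var_convex_at_localization[where e = e2 and d = "e1 - e2"]
    unfolding e1 var_convex_at_def by fast
qed

end
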